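(* Let $(X,d,\mu)$ be a space of homogeneous type, $1\leq r<\infty$, $q=2r-1$. If $u\in RH_{q}$ and $u^{r}\in A_{\infty}$, then for $s=1+\frac{1}{2\tau[u^{r}]_{A_{\infty}}}$, every cube $Q$ of a dyadic system and every measurable subset $E\subset Q$, $$\frac{u^{sr}(E)}{u^{sr}(c_{d}Q)}\lesssim[u]_{RH_{q}}^{q/4}\left(\frac{u(E)}{u(c_{d}Q)}\right)^{\frac{1}{4}}.$$
   Context: Space of homogeneous type: quasi-metric $d$, doubling Borel measure $\mu$. Dyadic system with parameters $c_0\le C_0$, $\delta$: cubes $Q=Q^k_j$ with $B(z^k_j,c_0\delta^k)\subset Q\subset B(z^k_j,C_0\delta^k)$; dilation $\alpha Q:=B(z^k_j,\alpha C_0\delta^k)$ for $\alpha\ge1$ (a ball). $w\in RH_q$ means $\big(\frac{w^q(B)}{\mu(B)}\big)^{1/q}\le[w]_{RH_q}\frac{w(c_dB)}{\mu(c_dB)}$ for all balls $B$, with $c_d\ge1$ a fixed constant depending on $X$. $[w]_{A_\infty}=\sup_B\frac1{w(B)}\int_BM(\chi_Bw)$. $\tau>0$ is the constant (depending on $X$) of the sharp reverse Hölder inequality: if $w\in A_\infty$ and $1\le t\le1+\frac1{\tau[w]_{A_\infty}}$ then $\big(\frac{w^t(B)}{\mu(B)}\big)^{1/t}\le c\frac{w(c_dB)}{\mu(c_dB)}$. Implicit constants depend only on $X$ and the dyadic system. *)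

theory Defs
  imports "HOL-Analysis.Analysis"
begin

definition qball :: "('a \<Rightarrow> 'a \<Rightarrow> real) \<Rightarrow> 'a \<Rightarrow> real \<Rightarrow> 'a set" where
  "qball d x \<rho> = {y. d x y < \<rho>}"

definition quasi_metric :: "('a \<Rightarrow> 'a \<Rightarrow> real) \<Rightarrow> real \<Rightarrow> bool" where
  "quasi_metric d A0 \<longleftrightarrow> 1 \<le> A0 \<and> (\<forall>x y. 0 \<le> d x y) \<and> (\<forall>x y. d x y = 0 \<longleftrightarrow> x = y)
     \<and> (\<forall>x y. d x y = d y x) \<and> (\<forall>x y z. d x z \<le> A0 * (d x y + d y z))"

definition homogeneous_space :: "'a measure \<Rightarrow> ('a \<Rightarrow> 'a \<Rightarrow> real) \<Rightarrow> real \<Rightarrow> real \<Rightarrow> bool" where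
  "homogeneous_space \<mu> d A0 Cdb \<longleftrightarrow> quasi_metric d A0 \<and> space \<mu> = UNIV
     \<and> (\<forall>U. (\<forall>x\<in>U. \<exists>\<rho>>0. qball d x \<rho> \<subseteq> U) \<longrightarrow> U \<in> sets \<mu>)
     \<and> (\<forall>x \<rho>. qball d x \<rho> \<in> sets \<mu>)
     \<and> (\<forall>x \<rho>. 0 < \<rho> \<longrightarrow> 0 < emeasure \<mu> (qball d x \<rho>) \<and> emeasure \<mu> (qball d x \<rho>) < \<infinity>)
     \<and> (\<forall>x \<rho>. 0 < \<rho> \<longrightarrow> emeasure \<mu> (qball d x (2 * \<rho>)) \<le> ennreal Cdb * emeasure \<mu> (qball d x \<rho>))"

definition weight :: "'a measure \<Rightarrow> ('a \<Rightarrow> 'a \<Rightarrow> real) \<Rightarrow> ('a \<Rightarrow> real) \<Rightarrow> bool" where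
  "weight \<mu> d w \<longleftrightarrow> w \<in> borel_measurable \<mu> \<and> (\<forall>x. 0 \<le> w x)
     \<and> (\<forall>x \<rho>. set_integrable \<mu> (qball d x \<rho>) w)"

definition wm :: "'a measure \<Rightarrow> ('a \<Rightarrow> real) \<Rightarrow> 'a set \<Rightarrow> real" where
  "wm \<mu> w E = set_lebesgue_integral \<mu> E w"

definition RH_holds :: "'a measure \<Rightarrow> ('a \<Rightarrow> 'a \<Rightarrow> real) \<Rightarrow> real \<Rightarrow> real \<Rightarrow> ('a \<Rightarrow> real) \<Rightarrow> real \<Rightarrow> bool" where
  "RH_holds \<mu> d cd q w C \<longleftrightarrow> (\<forall>x \<rho>. 0 < \<rho> \<longrightarrow>
      set_integrable \<mu> (qball d x \<rho>) (\<lambda>y. w y powr q) \<and>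
      (wm \<mu> (\<lambda>y. w y powr q) (qball d x \<rho>) / measure \<mu> (qball d x \<rho>)) powr (1 / q)
        \<le> C * (wm \<mu> w (qball d x (cd * \<rho>)) / measure \<mu> (qball d x (cd * \<rho>))))"

definition in_RH :: "'a measure \<Rightarrow> ('a \<Rightarrow> 'a \<Rightarrow> real) \<Rightarrow> real \<Rightarrow> real \<Rightarrow> ('a \<Rightarrow> real) \<Rightarrow> bool" where
  "in_RH \<mu> d cd q w \<longleftrightarrow> weight \<mu> d w \<and> (\<exists>C. RH_holds \<mu> d cd q w C)"

definition RH_const :: "'a measure \<Rightarrow> ('a \<Rightarrow> 'a \<Rightarrow> real) \<Rightarrow> real \<Rightarrow> real \<Rightarrow> ('a \<Rightarrow> real) \<Rightarrow> real" where
  "RH_const \<mu> d cd q w = Inf {C. 0 \<le> C \<and> RH_holds \<mu> d cd q w C}"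

definition maxf :: "'a measure \<Rightarrow> ('a \<Rightarrow> 'a \<Rightarrow> real) \<Rightarrow> ('a \<Rightarrow> real) \<Rightarrow> 'a \<Rightarrow> ennreal" where
  "maxf \<mu> d f x = (SUP p \<in> {(y, \<rho>). 0 < \<rho> \<and> x \<in> qball d y \<rho>}.
      (\<integral>\<^sup>+ z\<in>qball d (fst p) (snd p). ennreal \<bar>f z\<bar> \<partial>\<mu>) / emeasure \<mu> (qball d (fst p) (snd p)))"

text \<open>[w]_{A_\<infinity>} = sup_B (1/w(B)) int_B M(chi_B w) (Fujii--Wilson constant).\<close>
definition Ainf_const_enn :: "'a measure \<Rightarrow> ('a \<Rightarrow> 'a \<Rightarrow> real) \<Rightarrow> ('a \<Rightarrow> real) \<Rightarrow> ennreal" where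
  "Ainf_const_enn \<mu> d w = (SUP p \<in> {(x, \<rho>). 0 < \<rho>}.
      (\<integral>\<^sup>+ y\<in>qball d (fst p) (snd p).
          maxf \<mu> d (\<lambda>z. indicator (qball d (fst p) (snd p)) z * w z) y \<partial>\<mu>)
      / ennreal (wm \<mu> w (qball d (fst p) (snd p))))"

definition in_Ainf :: "'a measure \<Rightarrow> ('a \<Rightarrow> 'a \<Rightarrow> real) \<Rightarrow> ('a \<Rightarrow> real) \<Rightarrow> bool" where
  "in_Ainf \<mu> d w \<longleftrightarrow> weight \<mu> d w \<and> Ainf_const_enn \<mu> d w < \<infinity>"

definition Ainf_const :: "'a measure \<Rightarrow> ('a \<Rightarrow> 'a \<Rightarrow> real) \<Rightarrow> ('a \<Rightarrow> real) \<Rightarrow> real" where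
  "Ainf_const \<mu> d w = enn2real (Ainf_const_enn \<mu> d w)"

definition sharp_RHI :: "'a measure \<Rightarrow> ('a \<Rightarrow> 'a \<Rightarrow> real) \<Rightarrow> real \<Rightarrow> real \<Rightarrow> real \<Rightarrow> bool" where
  "sharp_RHI \<mu> d cd \<tau> c \<longleftrightarrow> 0 < \<tau> \<and> (\<forall>w t. in_Ainf \<mu> d w \<longrightarrow> 1 \<le> t \<longrightarrow>
      t \<le> 1 + 1 / (\<tau> * Ainf_const \<mu> d w) \<longrightarrow> RH_holds \<mu> d cd t w c)"

text \<open>Dyadic system (Hytonen--Kairema): cubes D k j, j \<in> J k, with centres z k j.\<close>
definition dyadic_system :: "'a measure \<Rightarrow> ('a \<Rightarrow> 'a \<Rightarrow> real) \<Rightarrow> real \<Rightarrow> real \<Rightarrow> real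
    \<Rightarrow> (int \<Rightarrow> 'i set) \<Rightarrow> (int \<Rightarrow> 'i \<Rightarrow> 'a set) \<Rightarrow> (int \<Rightarrow> 'i \<Rightarrow> 'a) \<Rightarrow> bool" where
  "dyadic_system \<mu> d \<delta> c0 C0 J D z \<longleftrightarrow> 0 < \<delta> \<and> \<delta> < 1 \<and> 0 < c0 \<and> c0 \<le> C0
     \<and> (\<forall>k. \<forall>j\<in>J k. D k j \<in> sets \<mu>)
     \<and> (\<forall>k. \<Union> (D k ` J k) = UNIV)
     \<and> (\<forall>k. \<forall>i\<in>J k. \<forall>j\<in>J k. i \<noteq> j \<longrightarrow> D k i \<inter> D k j = {})
     \<and> (\<forall>k l. k \<le> l \<longrightarrow> (\<forall>i\<in>J k. \<forall>j\<in>J l. D l j \<subseteq> D k i \<or> D k i \<inter> D l j = {}))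
     \<and> (\<forall>k. \<forall>j\<in>J k. qball d (z k j) (c0 * \<delta> powr (real_of_int k)) \<subseteq> D k j
                     \<and> D k j \<subseteq> qball d (z k j) (C0 * \<delta> powr (real_of_int k)))"

end

theory Submission
  imports Defs
begin

(* Write w = u^r, t = 2s - 1 and q = 2r - 1. The choice of s makes t the largest exponent allowed
   in the sharp reverse Hoelder inequality for w, while q is the reverse Hoelder exponent of u.
   Cauchy-Schwarz for w^s = w^(t/2) w^(1/2) and for w = u^(q/2) u^(1/2) gives
     w^s(E)^4 <= w^t(B)^2 u^q(B) u(E)
   for a ball B containing Q. The two reverse Hoelder inequalities bound w^t(B) and u^q(B) by averages
   of w and u over c_d B, and Jensen's inequality on c_d B (the u-average to the power r is at most the
   w-average, whose s-th power is at most the w^s-average) turns the right-hand side into a constant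
   times w^s(c_d B)^4 u(E) / u(c_d B). That constant involves c^(2t), which stays bounded because
   [w]_{A_infty} >= 1 keeps t <= 1 + 1/tau. *)

lemma powr_power_nonneg:
  fixes x e :: real
  assumes "0 \<le> x" "n \<noteq> 0"
  shows "(x powr e) ^ n = x powr (real n * e)"
  using assms by (cases "x = 0") (simp_all add: powr_power)

lemma power2_powr_eq:
  fixes y s :: real
  assumes "0 \<le> y"
  shows "(y powr s)\<^sup>2 = y powr (2 * s - 1) * y"
proof -
  have "(y powr s)\<^sup>2 = y powr ((2 * s - 1) + 1)"
    using assms by (simp add: powr_power_nonneg)
  also have "\<dots> = y powr (2 * s - 1) * y"
    using assms by (simp only: powr_add powr_one)
  finally show ?thesis .
qed

lemma le_mult_powr_if_root_le:
  fixes a m p y :: real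
  assumes "0 \<le> a" "0 < m" "0 < p" "(a / m) powr (1 / p) \<le> y"
  shows "a \<le> m * y powr p"
proof -
  have "a / m = ((a / m) powr (1 / p)) powr p"
    using assms by (simp add: powr_powr)
  also have "\<dots> \<le> y powr p"
    using assms by (intro powr_mono2) auto
  finally show ?thesis
    using \<open>0 < m\<close> by (simp add: pos_divide_le_eq mult.commute)
qed

lemma powr_le_max_one_powr:
  fixes c a b :: real
  assumes "0 \<le> c" "0 \<le> a" "a \<le> b"
  shows "c powr a \<le> max 1 c powr b"
proof -
  have "c powr a \<le> max 1 c powr a"
    using assms by (intro powr_mono2) auto
  also have "\<dots> \<le> max 1 c powr b"
    using assms by (intro powr_mono) auto
  finally show ?thesis .
qed

lemma powr_ge_tangent:
  fixes x m p :: real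
  assumes "0 \<le> x" "0 < m" "1 \<le> p"
  shows "m powr p + p * m powr (p - 1) * (x - m) \<le> x powr p"
proof (cases "x = 0")
  case True
  have "m powr (p - 1) * m = m powr p"
    using \<open>0 < m\<close> by (simp add: powr_diff)
  then show ?thesis
    using True \<open>1 \<le> p\<close> \<open>0 < m\<close> by (simp add: algebra_simps mult_le_cancel_right1)
next
  case False
  have "((\<lambda>y. y powr p) has_field_derivative p * m powr (p - 1)) (at m within {0<..})"
    using has_real_derivative_powr[OF \<open>0 < m\<close>] by (rule has_field_derivative_at_within)
  then have "p * m powr (p - 1) * (x - m) \<le> x powr p - m powr p"
    using convex_on_imp_above_tangent[OF powr_convex[OF \<open>1 \<le> p\<close>]] False assms
    by (simp add: interior_open)
  then show ?thesis by simp
qed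

lemma power4_le_of_Cauchy_Schwarz_chain:
  fixes IE WE UE a b :: real
  assumes "IE\<^sup>2 \<le> a * WE" "WE\<^sup>2 \<le> b * UE"
  shows "IE ^ 4 \<le> a\<^sup>2 * b * UE"
proof -
  have "IE ^ 4 = (IE\<^sup>2)\<^sup>2" by simp
  also have "\<dots> \<le> a\<^sup>2 * WE\<^sup>2"
    using assms(1) by (metis power_mono power_mult_distrib zero_le_power2)
  also have "\<dots> \<le> a\<^sup>2 * (b * UE)"
    using assms(2) by (simp add: mult_left_mono)
  finally show ?thesis by (simp add: mult.assoc)
qed

lemma exponent_balance_bound:
  fixes \<alpha> \<beta> m m' r s :: real
  assumes "\<beta> powr r \<le> \<alpha>" "0 < \<beta>" "0 < m" "m \<le> m'"
  shows "m ^ 3 * (\<alpha> powr (2 * (2 * s - 1)) * \<beta> powr (2 * r - 1)) * (m' * \<beta>)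
    \<le> (m' * \<alpha> powr s) ^ 4"
proof -
  have "0 < \<alpha>" using assms(1,2) by (smt (verit) powr_gt_zero)
  have "\<beta> powr (2 * r - 1) * \<beta> = \<beta> powr ((2 * r - 1) + 1)"
    using \<open>0 < \<beta>\<close> by (simp only: powr_add powr_one less_imp_le)
  also have "\<dots> = (\<beta> powr r)\<^sup>2"
    using \<open>0 < \<beta>\<close> by (simp add: powr_power_nonneg)
  also have "\<dots> \<le> \<alpha>\<^sup>2"
    using assms(1,2) by (intro power_mono) auto
  finally have "\<alpha> powr (2 * (2 * s - 1)) * (\<beta> powr (2 * r - 1) * \<beta>)
      \<le> \<alpha> powr (2 * (2 * s - 1)) * \<alpha>\<^sup>2"
    by (simp add: mult_left_mono)
  also have "\<dots> = \<alpha> powr (2 * (2 * s - 1)) * \<alpha> powr 2"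
    using \<open>0 < \<alpha>\<close> by simp
  also have "\<dots> = \<alpha> powr (4 * s)"
    unfolding powr_add[symmetric] by simp
  finally have "m ^ 3 * m' * (\<alpha> powr (2 * (2 * s - 1)) * (\<beta> powr (2 * r - 1) * \<beta>))
      \<le> m' ^ 3 * m' * \<alpha> powr (4 * s)"
    using assms(2-4) by (intro mult_mono power_mono) auto
  then show ?thesis
    using \<open>0 < \<alpha>\<close>
    by (simp add: mult_ac power_mult_distrib powr_power_nonneg power_Suc2 flip: power_Suc)
qed

(* The numbers stand for IE = w^s(E), WE = w(E), UE = u(E), I' = w^s(B'), U' = u(B'),
   a = w^(2s-1)(B), b = u^(2r-1)(B), m = |B|, m' = |B'|, and \<alpha>, \<beta> the averages of w, u over B'. *)
lemma reverse_Hoelder_ratio_bound: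
  fixes IE WE UE a b I' U' m m' \<alpha> \<beta> c K r s :: real
  assumes CS_w: "IE\<^sup>2 \<le> a * WE" and CS_u: "WE\<^sup>2 \<le> b * UE"
    and RH_w: "a \<le> m * (c * \<alpha>) powr (2 * s - 1)"
    and RH_u: "b \<le> m * (K * \<beta>) powr (2 * r - 1)"
    and Jensen_s: "m' * \<alpha> powr s \<le> I'" and Jensen_r: "\<beta> powr r \<le> \<alpha>"
    and U': "U' = m' * \<beta>"
    and "0 < m" "m \<le> m'" "0 < \<beta>" "0 \<le> c" "0 \<le> K" "0 \<le> IE" "0 \<le> a" "0 \<le> b" "0 \<le> UE"
  shows "IE / I' \<le> c powr ((2 * s - 1) / 2) * K powr ((2 * r - 1) / 4) * (UE / U') powr (1 / 4)"
proof -
  define t q where "t = 2 * s - 1" and "q = 2 * r - 1"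
  define R where "R = c powr (t / 2) * K powr (q / 4) * (UE / U') powr (1 / 4)"
  have "0 < \<alpha>" using Jensen_r \<open>0 < \<beta>\<close> by (smt (verit) powr_gt_zero)
  have "0 < m'" "0 < U'" using \<open>0 < m\<close> \<open>m \<le> m'\<close> \<open>0 < \<beta>\<close> U' by auto
  have "0 < I'" using Jensen_s \<open>0 < m'\<close> \<open>0 < \<alpha>\<close> by (smt (verit) mult_pos_pos powr_gt_zero)
  have "IE ^ 4 \<le> a\<^sup>2 * b * UE"
    using CS_w CS_u by (rule power4_le_of_Cauchy_Schwarz_chain)
  also have "\<dots> \<le> (m * (c * \<alpha>) powr t)\<^sup>2 * (m * (K * \<beta>) powr q) * UE"
    using RH_w RH_u \<open>0 \<le> a\<close> \<open>0 \<le> b\<close> \<open>0 \<le> UE\<close> unfolding t_def q_def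
    by (intro mult_right_mono mult_mono power_mono) auto
  also have "\<dots> = c powr (2 * t) * K powr q * UE * (m ^ 3 * (\<alpha> powr (2 * t) * \<beta> powr q))"
    using \<open>0 \<le> c\<close> \<open>0 < \<alpha>\<close> \<open>0 \<le> K\<close> \<open>0 < \<beta>\<close>
    by (simp add: powr_mult power_mult_distrib powr_power_nonneg power3_eq_cube power2_eq_square[of m])
  also have "\<dots> \<le> c powr (2 * t) * K powr q * UE * (I' ^ 4 / U')"
  proof (intro mult_left_mono)
    have "m ^ 3 * (\<alpha> powr (2 * t) * \<beta> powr q) \<le> (m' * \<alpha> powr s) ^ 4 / U'"
      using exponent_balance_bound[OF Jensen_r \<open>0 < \<beta>\<close> \<open>0 < m\<close> \<open>m \<le> m'\<close>, of s] \<open>0 < U'\<close>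
      unfolding t_def q_def U' by (simp add: pos_le_divide_eq)
    also have "\<dots> \<le> I' ^ 4 / U'"
      using Jensen_s \<open>0 < U'\<close> \<open>0 < m'\<close> \<open>0 < \<alpha>\<close> by (intro divide_right_mono power_mono) auto
    finally show "m ^ 3 * (\<alpha> powr (2 * t) * \<beta> powr q) \<le> I' ^ 4 / U'" .
  qed (use \<open>0 \<le> UE\<close> in simp)
  also have "\<dots> = (R * I') ^ 4"
  proof -
    have "R ^ 4 = c powr (2 * t) * K powr q * (UE / U')"
      using \<open>0 \<le> c\<close> \<open>0 \<le> K\<close> \<open>0 \<le> UE\<close> \<open>0 < U'\<close>
      by (simp add: R_def power_mult_distrib powr_power_nonneg)
    then show ?thesis by (simp add: power_mult_distrib mult_ac)
  qed
  finally have "IE \<le> R * I'"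
    using \<open>0 \<le> IE\<close> \<open>0 < I'\<close> by (simp add: R_def)
  then show ?thesis
    using \<open>0 < I'\<close> by (simp add: R_def t_def q_def pos_divide_le_eq)
qed

lemma set_integral_nonneg:
  fixes f :: "'a \<Rightarrow> real"
  assumes "\<And>x. 0 \<le> f x"
  shows "0 \<le> (LINT x:A|M. f x)"
  unfolding set_lebesgue_integral_def using assms by (simp add: indicator_def)

lemma set_integral_mono_subset:
  fixes f :: "'a \<Rightarrow> real"
  assumes "set_integrable M B f" "A \<in> sets M" "A \<subseteq> B" "\<And>x. 0 \<le> f x"
  shows "(LINT x:A|M. f x) \<le> (LINT x:B|M. f x)"
  using assms set_integrable_subset[OF assms(1-3)]
  unfolding set_lebesgue_integral_def set_integrable_def
  by (intro integral_mono) (auto simp: indicator_def)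

lemma nn_set_integral_eq_set_integral:
  fixes f :: "'a \<Rightarrow> real"
  assumes "set_integrable M A f" "\<And>x. 0 \<le> f x"
  shows "(\<integral>\<^sup>+x\<in>A. ennreal (f x) \<partial>M) = ennreal (LINT x:A|M. f x)"
proof -
  have "(\<integral>\<^sup>+x\<in>A. ennreal (f x) \<partial>M) = (\<integral>\<^sup>+x. ennreal (indicator A x *\<^sub>R f x) \<partial>M)"
    by (intro nn_integral_cong) (auto simp: indicator_def)
  also have "\<dots> = ennreal (LINT x:A|M. f x)"
    using assms unfolding set_lebesgue_integral_def set_integrable_def
    by (intro nn_integral_eq_integral) (auto simp: indicator_def)
  finally show ?thesis .
qed

lemma set_integral_eq_0_transfer:
  fixes u g :: "'a \<Rightarrow> real"
  assumes "set_integrable M S u" "\<And>x. 0 \<le> u x" "(LINT x:S|M. u x) = 0"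
    and "\<And>x. u x = 0 \<Longrightarrow> g x = 0"
  shows "(LINT x:S|M. g x) = 0"
proof -
  have "AE x in M. indicator S x *\<^sub>R u x = 0"
    using assms(1-3) unfolding set_lebesgue_integral_def set_integrable_def
    by (subst integral_nonneg_eq_0_iff_AE[symmetric]) (auto simp: indicator_def)
  then have "AE x in M. indicator S x *\<^sub>R g x = 0"
    by eventually_elim (auto simp: indicator_def assms(4) split: if_splits)
  then show ?thesis
    unfolding set_lebesgue_integral_def by (rule integral_eq_zero_AE)
qed

lemma set_integral_Cauchy_Schwarz:
  fixes h F G :: "'a \<Rightarrow> real"
  assumes int: "set_integrable M A h" "set_integrable M A F" "set_integrable M A G"
    and nonneg: "\<And>x. 0 \<le> h x" "\<And>x. 0 \<le> F x" "\<And>x. 0 \<le> G x"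
    and dom: "\<And>x. x \<in> A \<Longrightarrow> (h x)\<^sup>2 \<le> F x * G x"
  shows "(LINT x:A|M. h x)\<^sup>2 \<le> (LINT x:A|M. F x) * (LINT x:A|M. G x)"
proof -
  define f where "f x = ennreal (sqrt (indicator A x * F x))" for x
  define g where "g x = ennreal (sqrt (indicator A x * G x))" for x
  have "(\<lambda>x. indicator A x * F x) \<in> borel_measurable M" "(\<lambda>x. indicator A x * G x) \<in> borel_measurable M"
    using int(2,3) unfolding set_integrable_def by (auto dest: borel_measurable_integrable)
  then have [measurable]: "f \<in> borel_measurable M" "g \<in> borel_measurable M"
    unfolding f_def g_def by measurable
  have "(\<integral>\<^sup>+x\<in>A. ennreal (h x) \<partial>M) \<le> (\<integral>\<^sup>+x. f x * g x \<partial>M)"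
  proof (intro nn_integral_mono)
    fix x
    have "h x * indicator A x \<le> sqrt (indicator A x * F x) * sqrt (indicator A x * G x)"
      using dom[of x] nonneg[of x] real_le_rsqrt[of "h x" "F x * G x"]
      by (auto simp: indicator_def real_sqrt_mult)
    then show "ennreal (h x) * indicator A x \<le> f x * g x"
      unfolding f_def g_def using nonneg[of x]
      by (cases "x \<in> A") (simp_all add: ennreal_leI flip: ennreal_mult)
  qed
  then have "(\<integral>\<^sup>+x\<in>A. ennreal (h x) \<partial>M)\<^sup>2 \<le> (\<integral>\<^sup>+x. f x * g x \<partial>M)\<^sup>2"
    by (rule power_mono) simp
  also have "\<dots> \<le> (\<integral>\<^sup>+x. f x ^ 2 \<partial>M) * (\<integral>\<^sup>+x. g x ^ 2 \<partial>M)"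
    by (rule Cauchy_Schwarz_nn_integral) measurable
  also have "(\<integral>\<^sup>+x. f x ^ 2 \<partial>M) = (\<integral>\<^sup>+x\<in>A. ennreal (F x) \<partial>M)"
    unfolding f_def using nonneg(2)
    by (intro nn_integral_cong) (auto simp: indicator_def ennreal_power)
  also have "(\<integral>\<^sup>+x. g x ^ 2 \<partial>M) = (\<integral>\<^sup>+x\<in>A. ennreal (G x) \<partial>M)"
    unfolding g_def using nonneg(3)
    by (intro nn_integral_cong) (auto simp: indicator_def ennreal_power)
  finally have "ennreal ((LINT x:A|M. h x)\<^sup>2) \<le> ennreal ((LINT x:A|M. F x) * (LINT x:A|M. G x))"
    using int nonneg
    by (simp add: nn_set_integral_eq_set_integral set_integral_nonneg ennreal_power
        flip: ennreal_mult)
  then show ?thesis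
    using nonneg by (simp add: set_integral_nonneg)
qed

lemma set_integral_powr_squared_le:
  fixes v :: "'a \<Rightarrow> real"
  assumes "E \<in> sets M" "E \<subseteq> B" "\<And>x. 0 \<le> v x"
    and "set_integrable M E (\<lambda>x. v x powr p)" "set_integrable M E v"
      "set_integrable M B (\<lambda>x. v x powr (2 * p - 1))"
  shows "(LINT x:E|M. v x powr p)\<^sup>2 \<le> (LINT x:B|M. v x powr (2 * p - 1)) * (LINT x:E|M. v x)"
proof -
  have "(LINT x:E|M. v x powr p)\<^sup>2 \<le> (LINT x:E|M. v x powr (2 * p - 1)) * (LINT x:E|M. v x)"
    using assms set_integrable_subset[OF assms(6,1,2)]
    by (intro set_integral_Cauchy_Schwarz) (auto simp: power2_powr_eq)
  also have "\<dots> \<le> (LINT x:B|M. v x powr (2 * p - 1)) * (LINT x:E|M. v x)"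
    using assms by (intro mult_right_mono set_integral_mono_subset set_integral_nonneg) auto
  finally show ?thesis .
qed

lemma set_integral_average_powr_le:
  fixes f :: "'a \<Rightarrow> real"
  assumes "S \<in> sets M" "0 < measure M S" "\<And>x. 0 \<le> f x" "1 \<le> p"
    and "set_integrable M S f" "set_integrable M S (\<lambda>x. f x powr p)"
  shows "((LINT x:S|M. f x) / measure M S) powr p \<le> (LINT x:S|M. f x powr p) / measure M S"
proof -
  define m where "m = (LINT x:S|M. f x) / measure M S"
  have "emeasure M S < \<infinity>"
    using \<open>0 < measure M S\<close> by (simp add: measure_def enn2real_positive_iff)
  have "0 \<le> m"
    unfolding m_def using assms by (simp add: set_integral_nonneg)
  show ?thesis
  proof (cases "m = 0")
    case True
    then show ?thesis
      using \<open>0 < measure M S\<close> by (simp add: m_def set_integral_nonneg)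
  next
    case False
    with \<open>0 \<le> m\<close> have "0 < m" by simp
    have const: "set_integrable M S (\<lambda>x. c)" for c :: real
      using \<open>S \<in> sets M\<close> \<open>emeasure M S < \<infinity>\<close>
      unfolding set_integrable_def by (simp add: integrable_real_indicator)
    have "(LINT x:S|M. m powr p + p * m powr (p - 1) * (f x - m)) \<le> (LINT x:S|M. f x powr p)"
      using powr_ge_tangent[OF assms(3) \<open>0 < m\<close> \<open>1 \<le> p\<close>] const assms(5,6)
      by (intro set_integral_mono) auto
    also have "(LINT x:S|M. m powr p + p * m powr (p - 1) * (f x - m))
        = measure M S * m powr p + p * m powr (p - 1) * ((LINT x:S|M. f x) - measure M S * m)"
      using const assms(5) \<open>S \<in> sets M\<close> \<open>emeasure M S < \<infinity>\<close>
      by (simp add: set_integral_add set_integral_diff set_integral_const)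
    also have "(LINT x:S|M. f x) - measure M S * m = 0"
      unfolding m_def using \<open>0 < measure M S\<close> by simp
    finally show ?thesis
      using \<open>0 < measure M S\<close> by (simp add: m_def field_simps)
  qed
qed

lemma weighted_ratio_le_reverse_Hoelder:
  fixes M :: "'a measure" and u w :: "'a \<Rightarrow> real" and r s c K :: real
  assumes w_eq: "w = (\<lambda>x. u x powr r)"
    and sets: "E \<in> sets M" "B \<in> sets M" "B' \<in> sets M" "E \<subseteq> B" "B \<subseteq> B'"
    and "0 < measure M B" "0 < measure M B'"
    and u_nonneg: "\<And>x. 0 \<le> u x" and "1 \<le> r" "1 \<le> s"
    and int_u: "set_integrable M B' u" "set_integrable M B (\<lambda>x. u x powr (2 * r - 1))"
    and int_w: "set_integrable M B' w" "set_integrable M B' (\<lambda>x. w x powr s)"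
      "set_integrable M B (\<lambda>x. w x powr (2 * s - 1))"
    and RH_w: "(wm M (\<lambda>x. w x powr (2 * s - 1)) B / measure M B) powr (1 / (2 * s - 1))
      \<le> c * (wm M w B' / measure M B')"
    and RH_u: "(wm M (\<lambda>x. u x powr (2 * r - 1)) B / measure M B) powr (1 / (2 * r - 1))
      \<le> K * (wm M u B' / measure M B')"
    and "0 \<le> c" "0 \<le> K" "0 < wm M u B'"
  shows "wm M (\<lambda>x. w x powr s) E / wm M (\<lambda>x. w x powr s) B'
    \<le> c powr ((2 * s - 1) / 2) * K powr ((2 * r - 1) / 4) * (wm M u E / wm M u B') powr (1 / 4)"
proof -
  define m m' where "m = measure M B" and "m' = measure M B'"
  define \<alpha> \<beta> where "\<alpha> = wm M w B' / m'" and "\<beta> = wm M u B' / m'"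
  have w_nonneg: "\<And>x. 0 \<le> w x" by (simp add: w_eq)
  have "emeasure M B' < \<infinity>"
    using \<open>0 < measure M B'\<close> by (simp add: measure_def enn2real_positive_iff)
  then have "m \<le> m'"
    unfolding m_def m'_def using sets by (intro measure_mono_fmeasurable) (auto simp: fmeasurable_def)
  have "0 \<le> wm M u E"
    by (simp add: wm_def set_integral_nonneg u_nonneg)
  have "E \<subseteq> B'" using sets by blast
  have CS_w: "(wm M (\<lambda>x. w x powr s) E)\<^sup>2 \<le> wm M (\<lambda>x. w x powr (2 * s - 1)) B * wm M w E"
    unfolding wm_def
    using set_integrable_subset[OF int_w(2) sets(1) \<open>E \<subseteq> B'\<close>]
      set_integrable_subset[OF int_w(1) sets(1) \<open>E \<subseteq> B'\<close>]
    by (intro set_integral_powr_squared_le[OF sets(1,4) w_nonneg _ _ int_w(3)])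
  have CS_u: "(wm M w E)\<^sup>2 \<le> wm M (\<lambda>x. u x powr (2 * r - 1)) B * wm M u E"
    unfolding wm_def w_eq
    using set_integrable_subset[OF int_w(1)[unfolded w_eq] sets(1) \<open>E \<subseteq> B'\<close>]
      set_integrable_subset[OF int_u(1) sets(1) \<open>E \<subseteq> B'\<close>]
    by (intro set_integral_powr_squared_le[OF sets(1,4) u_nonneg _ _ int_u(2)])
  have RH_w': "wm M (\<lambda>x. w x powr (2 * s - 1)) B \<le> m * (c * \<alpha>) powr (2 * s - 1)"
    using \<open>1 \<le> s\<close> \<open>0 < measure M B\<close> RH_w unfolding m_def \<alpha>_def m'_def
    by (intro le_mult_powr_if_root_le) (auto simp: wm_def set_integral_nonneg w_nonneg)
  have RH_u': "wm M (\<lambda>x. u x powr (2 * r - 1)) B \<le> m * (K * \<beta>) powr (2 * r - 1)"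
    using \<open>1 \<le> r\<close> \<open>0 < measure M B\<close> RH_u unfolding m_def \<beta>_def m'_def
    by (intro le_mult_powr_if_root_le) (auto simp: wm_def set_integral_nonneg u_nonneg)
  have "\<alpha> powr s \<le> wm M (\<lambda>x. w x powr s) B' / m'"
    unfolding \<alpha>_def m'_def wm_def
    using set_integral_average_powr_le[OF sets(3) \<open>0 < measure M B'\<close> w_nonneg \<open>1 \<le> s\<close>] int_w
    by simp
  then have Jensen_s: "m' * \<alpha> powr s \<le> wm M (\<lambda>x. w x powr s) B'"
    using \<open>0 < measure M B'\<close> by (simp add: m'_def pos_le_divide_eq mult.commute)
  have Jensen_r: "\<beta> powr r \<le> \<alpha>"
    unfolding \<alpha>_def \<beta>_def m'_def wm_def w_eq
    using set_integral_average_powr_le[OF sets(3) \<open>0 < measure M B'\<close> u_nonneg \<open>1 \<le> r\<close>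
        int_u(1) int_w(1)[unfolded w_eq]] .
  have "wm M u B' = m' * \<beta>"
    using \<open>0 < measure M B'\<close> by (simp add: \<beta>_def m'_def)
  moreover have "0 < \<beta>"
    using \<open>0 < measure M B'\<close> \<open>0 < wm M u B'\<close> by (simp add: \<beta>_def m'_def)
  ultimately show ?thesis
    using reverse_Hoelder_ratio_bound[OF CS_w CS_u RH_w' RH_u' Jensen_s Jensen_r]
      \<open>0 < measure M B\<close> \<open>m \<le> m'\<close> \<open>0 \<le> c\<close> \<open>0 \<le> K\<close> \<open>0 \<le> wm M u E\<close>
    by (auto simp: m_def wm_def set_integral_nonneg w_nonneg u_nonneg)
qed

lemma wm_nonneg: "(\<And>x. 0 \<le> w x) \<Longrightarrow> 0 \<le> wm M w E"
  unfolding wm_def by (rule set_integral_nonneg)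

lemma RH_holdsD:
  assumes "RH_holds M d cd q w C" "0 < \<rho>"
  shows "set_integrable M (qball d x \<rho>) (\<lambda>y. w y powr q)"
    and "(wm M (\<lambda>y. w y powr q) (qball d x \<rho>) / measure M (qball d x \<rho>)) powr (1 / q)
      \<le> C * (wm M w (qball d x (cd * \<rho>)) / measure M (qball d x (cd * \<rho>)))"
  using assms unfolding RH_holds_def by auto

lemma RH_holds_mono:
  assumes "RH_holds M d cd q w C" "C \<le> C'" "weight M d w"
  shows "RH_holds M d cd q w C'"
proof -
  have "0 \<le> wm M w B / measure M B" for B
    using \<open>weight M d w\<close> by (simp add: weight_def wm_nonneg)
  then show ?thesis
    using assms(1,2) unfolding RH_holds_def by (meson mult_right_mono order_trans)
qed

lemma le_Inf_mult:
  fixes L a :: real and S :: "real set"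
  assumes "\<And>C. C \<in> S \<Longrightarrow> L \<le> C * a" "S \<noteq> {}" "0 \<le> a"
  shows "L \<le> Inf S * a"
proof (cases "a = 0")
  case True
  then show ?thesis using assms(1,2) by fastforce
next
  case False
  with assms have "L / a \<le> Inf S"
    by (intro cInf_greatest) (auto simp: pos_divide_le_eq)
  with False \<open>0 \<le> a\<close> show ?thesis by (simp add: pos_divide_le_eq)
qed

lemma RH_const_nonneg_and_RH_holds:
  assumes "in_RH M d cd q w"
  shows "0 \<le> RH_const M d cd q w" "RH_holds M d cd q w (RH_const M d cd q w)"
proof -
  define S where "S = {C. 0 \<le> C \<and> RH_holds M d cd q w C}"
  from assms obtain C where C: "RH_holds M d cd q w C" and "weight M d w"
    unfolding in_RH_def by auto
  then have "max C 0 \<in> S"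
    unfolding S_def using RH_holds_mono[OF C] by simp
  then have "S \<noteq> {}" by blast
  show "0 \<le> RH_const M d cd q w"
    unfolding RH_const_def S_def[symmetric] using \<open>S \<noteq> {}\<close> by (auto intro: cInf_greatest simp: S_def)
  have "RH_holds M d cd q w (Inf S)"
    unfolding RH_holds_def
  proof (intro allI impI conjI)
    fix y and \<rho> :: real
    assume "0 < \<rho>"
    then show "set_integrable M (qball d y \<rho>) (\<lambda>y. w y powr q)"
      by (rule RH_holdsD(1)[OF C])
    let ?L = "(wm M (\<lambda>y. w y powr q) (qball d y \<rho>) / measure M (qball d y \<rho>)) powr (1 / q)"
    let ?a = "wm M w (qball d y (cd * \<rho>)) / measure M (qball d y (cd * \<rho>))"
    have "0 \<le> ?a"
      using \<open>weight M d w\<close> by (simp add: weight_def wm_nonneg)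
    have L_le: "?L \<le> C' * ?a" if "C' \<in> S" for C'
      using that \<open>0 < \<rho>\<close> unfolding S_def RH_holds_def by auto
    show "?L \<le> Inf S * ?a"
      using L_le \<open>S \<noteq> {}\<close> \<open>0 \<le> ?a\<close> by (rule le_Inf_mult)
  qed
  then show "RH_holds M d cd q w (RH_const M d cd q w)"
    unfolding RH_const_def S_def .
qed

lemma RH_holds_const_nonneg:
  assumes "RH_holds M d cd q w C" "0 < \<rho>"
    and "0 < wm M w (qball d x (cd * \<rho>)) / measure M (qball d x (cd * \<rho>))"
  shows "0 \<le> C"
proof -
  have "0 \<le> C * (wm M w (qball d x (cd * \<rho>)) / measure M (qball d x (cd * \<rho>)))"
    using RH_holdsD(2)[OF assms(1,2), of x] by (meson order_trans powr_ge_zero)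
  then show ?thesis
    using assms(3) by (metis mult_neg_pos not_le)
qed

lemma homogeneous_space_ball:
  assumes "homogeneous_space M d A0 Cdb"
  shows "qball d x \<rho> \<in> sets M"
    and "0 < \<rho> \<Longrightarrow> 0 < emeasure M (qball d x \<rho>)"
    and "0 < \<rho> \<Longrightarrow> emeasure M (qball d x \<rho>) < \<infinity>"
    and "0 < \<rho> \<Longrightarrow> 0 < measure M (qball d x \<rho>)"
  using assms unfolding homogeneous_space_def
  by (auto simp: measure_def enn2real_positive_iff)

lemma Ainf_const_ge_one:
  assumes "in_Ainf M d w" "0 < \<rho>" "qball d x \<rho> \<in> sets M"
    and "0 < emeasure M (qball d x \<rho>)" "emeasure M (qball d x \<rho>) < \<infinity>"
    and "0 < wm M w (qball d x \<rho>)"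
  shows "1 \<le> Ainf_const M d w"
proof -
  define B where "B = qball d x \<rho>"
  define W where "W = wm M w B"
  define Mw where "Mw = maxf M d (\<lambda>z. indicator B z * w z)"
  have "weight M d w" and fin: "Ainf_const_enn M d w < \<infinity>"
    using assms(1) unfolding in_Ainf_def by auto
  then have w_nonneg: "\<And>x. 0 \<le> w x" and "set_integrable M B w"
    unfolding weight_def B_def by auto
  have "0 < W" using assms(6) unfolding W_def B_def .
  have mB: "emeasure M B = ennreal (measure M B)"
    using assms(5) unfolding B_def by (simp add: emeasure_eq_ennreal_measure)
  with assms(4) have "0 < measure M B"
    unfolding B_def by (simp add: ennreal_less_zero_iff)
  define I where "I = (\<integral>\<^sup>+z\<in>B. ennreal \<bar>indicator B z * w z\<bar> \<partial>M)"
  have "I = (\<integral>\<^sup>+z\<in>B. ennreal (w z) \<partial>M)"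
    unfolding I_def using w_nonneg by (intro nn_integral_cong) (auto simp: indicator_def)
  also have "\<dots> = ennreal W"
    unfolding W_def wm_def by (rule nn_set_integral_eq_set_integral[OF \<open>set_integrable M B w\<close> w_nonneg])
  finally have I_avg: "I / emeasure M B = ennreal (W / measure M B)"
    using mB \<open>0 < measure M B\<close> \<open>0 < W\<close> by (simp add: divide_ennreal)
  have avg_le_Mw: "ennreal (W / measure M B) \<le> Mw y" if "y \<in> B" for y
    unfolding I_avg[symmetric] Mw_def maxf_def I_def
    using that \<open>0 < \<rho>\<close> unfolding B_def by (intro SUP_upper2[of "(x, \<rho>)"]) auto
  have "ennreal W = (\<integral>\<^sup>+y. ennreal (W / measure M B) * indicator B y \<partial>M)"
    using assms(3) mB \<open>0 < measure M B\<close> \<open>0 < W\<close> unfolding B_def[symmetric]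
    by (simp add: nn_integral_cmult_indicator ennreal_mult''[symmetric])
  also have "\<dots> \<le> (\<integral>\<^sup>+y\<in>B. Mw y \<partial>M)"
    using avg_le_Mw by (intro nn_integral_mono) (auto simp: indicator_def)
  finally have W_le: "ennreal W \<le> (\<integral>\<^sup>+y\<in>B. Mw y \<partial>M)" .
  have "1 = ennreal W / ennreal W"
    using \<open>0 < W\<close> by (simp add: divide_ennreal)
  also have "\<dots> \<le> (\<integral>\<^sup>+y\<in>B. Mw y \<partial>M) / ennreal W"
    using W_le by (rule divide_right_mono_ennreal)
  also have "\<dots> \<le> Ainf_const_enn M d w"
    unfolding Ainf_const_enn_def Mw_def W_def B_def
    using \<open>0 < \<rho>\<close> by (intro SUP_upper2[of "(x, \<rho>)"]) auto
  finally have "enn2real 1 \<le> enn2real (Ainf_const_enn M d w)"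
    using fin by (intro enn2real_mono) auto
  then show ?thesis
    unfolding Ainf_const_def by simp
qed

lemma sharp_RHI_midpoint_exponent:
  assumes "sharp_RHI M d cd \<tau> c" "in_Ainf M d w" "1 \<le> Ainf_const M d w"
  defines "s \<equiv> 1 + 1 / (2 * \<tau> * Ainf_const M d w)"
  shows "1 \<le> s" "2 * s - 1 \<le> 1 + 1 / \<tau>"
    and "RH_holds M d cd s w c" "RH_holds M d cd (2 * s - 1) w c"
proof -
  have "0 < \<tau>"
    and sharp: "\<And>t. 1 \<le> t \<Longrightarrow> t \<le> 1 + 1 / (\<tau> * Ainf_const M d w) \<Longrightarrow> RH_holds M d cd t w c"
    using assms(1,2) unfolding sharp_RHI_def by blast+
  have t_eq: "2 * s - 1 = 1 + 1 / (\<tau> * Ainf_const M d w)"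
    unfolding s_def using \<open>0 < \<tau>\<close> assms(3) by (simp add: field_simps)
  show "1 \<le> s"
    unfolding s_def using \<open>0 < \<tau>\<close> assms(3) by simp
  have "1 / (\<tau> * Ainf_const M d w) \<le> 1 / \<tau>"
    using \<open>0 < \<tau>\<close> assms(3) by (simp add: divide_simps mult_le_cancel_left1)
  with t_eq show "2 * s - 1 \<le> 1 + 1 / \<tau>"
    by simp
  show "RH_holds M d cd s w c" "RH_holds M d cd (2 * s - 1) w c"
    using t_eq \<open>1 \<le> s\<close> by (intro sharp; linarith)+
qed

lemma weighted_ratio_estimate_on_ball:
  fixes \<mu> :: "'a measure" and u :: "'a \<Rightarrow> real"
  assumes hs: "homogeneous_space \<mu> d A0 Cdb" and "1 \<le> cd" and sharp: "sharp_RHI \<mu> d cd \<tau> c"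
    and "0 < \<rho>" and "1 \<le> r" and u_RH: "in_RH \<mu> d cd (2 * r - 1) u"
    and w_Ainf: "in_Ainf \<mu> d (\<lambda>x. u x powr r)"
    and "E \<in> sets \<mu>" "E \<subseteq> qball d x \<rho>"
  defines "s \<equiv> 1 + 1 / (2 * \<tau> * Ainf_const \<mu> d (\<lambda>x. u x powr r))"
    and "B' \<equiv> qball d x (cd * \<rho>)"
  shows "wm \<mu> (\<lambda>y. u y powr (s * r)) E / wm \<mu> (\<lambda>y. u y powr (s * r)) B'
    \<le> max 1 c powr ((1 + 1 / \<tau>) / 2) * RH_const \<mu> d cd (2 * r - 1) u powr ((2 * r - 1) / 4)
      * (wm \<mu> u E / wm \<mu> u B') powr (1 / 4)"
proof -
  define w where "w = (\<lambda>x. u x powr r)"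
  define B where "B = qball d x \<rho>"
  define K where "K = RH_const \<mu> d cd (2 * r - 1) u"
  have "0 < cd * \<rho>" "\<rho> \<le> cd * \<rho>"
    using \<open>1 \<le> cd\<close> \<open>0 < \<rho>\<close> by simp_all
  then have sets: "E \<in> sets \<mu>" "B \<in> sets \<mu>" "B' \<in> sets \<mu>" "E \<subseteq> B" "B \<subseteq> B'"
    using \<open>E \<in> sets \<mu>\<close> \<open>E \<subseteq> qball d x \<rho>\<close> homogeneous_space_ball(1)[OF hs]
    unfolding B_def B'_def qball_def by auto
  have "weight \<mu> d u" "weight \<mu> d w"
    using u_RH w_Ainf unfolding in_RH_def in_Ainf_def w_def by auto
  then have u_nonneg: "\<And>x. 0 \<le> u x" and w_nonneg: "\<And>x. 0 \<le> w x"
    and int_u: "set_integrable \<mu> B' u" and int_w: "set_integrable \<mu> B' w"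
    unfolding weight_def B'_def by auto
  have ws: "(\<lambda>y. u y powr (s * r)) = (\<lambda>y. w y powr s)"
    unfolding w_def by (simp add: powr_powr mult.commute)
  show ?thesis
  proof (cases "wm \<mu> u B' = 0")
    case True
    \<comment> \<open>Then w^s vanishes a.e. on B' as well, and both sides are 0 since x / 0 = 0.\<close>
    then have "wm \<mu> (\<lambda>y. w y powr s) B' = 0"
      unfolding wm_def w_def by (rule set_integral_eq_0_transfer[OF int_u u_nonneg]) auto
    then show ?thesis
      by (simp add: ws True)
  next
    case False
    then have "0 < wm \<mu> u B'"
      using u_nonneg by (simp add: wm_nonneg order_less_le)
    have "wm \<mu> w B' \<noteq> 0"
    proof
      assume "wm \<mu> w B' = 0"
      then have "wm \<mu> u B' = 0"
        unfolding wm_def by (rule set_integral_eq_0_transfer[OF int_w w_nonneg]) (simp add: w_def)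
      with False show False ..
    qed
    then have "0 < wm \<mu> w B'"
      using w_nonneg by (simp add: wm_nonneg order_less_le)
    note ball = homogeneous_space_ball[OF hs]
    have "1 \<le> Ainf_const \<mu> d w"
      using Ainf_const_ge_one[OF w_Ainf[folded w_def] \<open>0 < cd * \<rho>\<close>] \<open>0 < wm \<mu> w B'\<close>
        ball(1) ball(2,3)[OF \<open>0 < cd * \<rho>\<close>] unfolding B'_def by blast
    moreover have "s = 1 + 1 / (2 * \<tau> * Ainf_const \<mu> d w)"
      unfolding s_def w_def ..
    ultimately have "1 \<le> s" "2 * s - 1 \<le> 1 + 1 / \<tau>"
      and RH_s: "RH_holds \<mu> d cd s w c" and RH_t: "RH_holds \<mu> d cd (2 * s - 1) w c"
      using sharp_RHI_midpoint_exponent[OF sharp w_Ainf[folded w_def]] by simp_all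
    have "0 < measure \<mu> B" "0 < measure \<mu> B'"
      using ball(4) \<open>0 < \<rho>\<close> \<open>0 < cd * \<rho>\<close> unfolding B_def B'_def by auto
    with \<open>0 < wm \<mu> w B'\<close> have "0 \<le> c"
      unfolding B'_def by (intro RH_holds_const_nonneg[OF RH_s \<open>0 < \<rho>\<close>, of x]) simp
    have RH_u: "RH_holds \<mu> d cd (2 * r - 1) u K" and "0 \<le> K"
      using RH_const_nonneg_and_RH_holds[OF u_RH] unfolding K_def by auto
    have "wm \<mu> (\<lambda>y. w y powr s) E / wm \<mu> (\<lambda>y. w y powr s) B'
        \<le> c powr ((2 * s - 1) / 2) * K powr ((2 * r - 1) / 4) * (wm \<mu> u E / wm \<mu> u B') powr (1 / 4)"
      by (rule weighted_ratio_le_reverse_Hoelder[OF w_def sets \<open>0 < measure \<mu> B\<close>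
            \<open>0 < measure \<mu> B'\<close> u_nonneg \<open>1 \<le> r\<close> \<open>1 \<le> s\<close> int_u
            RH_holdsD(1)[OF RH_u \<open>0 < \<rho>\<close>, of x, folded B_def] int_w
            RH_holdsD(1)[OF RH_s \<open>0 < cd * \<rho>\<close>, of x, folded B'_def]
            RH_holdsD[OF RH_t \<open>0 < \<rho>\<close>, of x, folded B_def B'_def]
            RH_holdsD(2)[OF RH_u \<open>0 < \<rho>\<close>, of x, folded B_def B'_def]
            \<open>0 \<le> c\<close> \<open>0 \<le> K\<close> \<open>0 < wm \<mu> u B'\<close>])
    also have "\<dots> \<le> max 1 c powr ((1 + 1 / \<tau>) / 2) * K powr ((2 * r - 1) / 4)
        * (wm \<mu> u E / wm \<mu> u B') powr (1 / 4)"
      using \<open>0 \<le> c\<close> \<open>1 \<le> s\<close> \<open>2 * s - 1 \<le> 1 + 1 / \<tau>\<close>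
      by (intro mult_right_mono powr_le_max_one_powr) auto
    finally show ?thesis
      unfolding ws K_def .
  qed
qed

theorem lemma3p9:
  fixes \<mu> :: "'a measure" and d :: "'a \<Rightarrow> 'a \<Rightarrow> real"
    and A0 Cdb cd \<tau> c \<delta> c0 C0 :: real
    and J :: "int \<Rightarrow> 'i set" and D :: "int \<Rightarrow> 'i \<Rightarrow> 'a set" and z :: "int \<Rightarrow> 'i \<Rightarrow> 'a"
  assumes "homogeneous_space \<mu> d A0 Cdb"
    and "1 \<le> cd"
    and "sharp_RHI \<mu> d cd \<tau> c"
    and "dyadic_system \<mu> d \<delta> c0 C0 J D z"
  shows "\<exists>C. \<forall>r u k j E. 1 \<le> r \<longrightarrow> in_RH \<mu> d cd (2 * r - 1) u
            \<longrightarrow> in_Ainf \<mu> d (\<lambda>x. u x powr r)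
            \<longrightarrow> j \<in> J k \<longrightarrow> E \<in> sets \<mu> \<longrightarrow> E \<subseteq> D k j \<longrightarrow>
            (let s = 1 + 1 / (2 * \<tau> * Ainf_const \<mu> d (\<lambda>x. u x powr r));
                 cdQ = qball d (z k j) (cd * C0 * \<delta> powr (real_of_int k))
             in wm \<mu> (\<lambda>x. u x powr (s * r)) E / wm \<mu> (\<lambda>x. u x powr (s * r)) cdQ
                \<le> C * RH_const \<mu> d cd (2 * r - 1) u powr ((2 * r - 1) / 4)
                    * (wm \<mu> u E / wm \<mu> u cdQ) powr (1 / 4))"
proof (intro exI allI impI)
  fix r u k j E
  assume "1 \<le> r" "in_RH \<mu> d cd (2 * r - 1) u" "in_Ainf \<mu> d (\<lambda>x. u x powr r)"
    and "j \<in> J k" "E \<in> sets \<mu>" "E \<subseteq> D k j"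
  define \<rho> where "\<rho> = C0 * \<delta> powr (real_of_int k)"
  have "0 < \<rho>" "D k j \<subseteq> qball d (z k j) \<rho>"
    using assms(4) \<open>j \<in> J k\<close> unfolding dyadic_system_def \<rho>_def by auto
  with \<open>E \<subseteq> D k j\<close> have "E \<subseteq> qball d (z k j) \<rho>" by blast
  from weighted_ratio_estimate_on_ball[OF assms(1-3) \<open>0 < \<rho>\<close> \<open>1 \<le> r\<close>
      \<open>in_RH \<mu> d cd (2 * r - 1) u\<close> \<open>in_Ainf \<mu> d (\<lambda>x. u x powr r)\<close> \<open>E \<in> sets \<mu>\<close> this]
  show "let s = 1 + 1 / (2 * \<tau> * Ainf_const \<mu> d (\<lambda>x. u x powr r));
            cdQ = qball d (z k j) (cd * C0 * \<delta> powr (real_of_int k))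
        in wm \<mu> (\<lambda>x. u x powr (s * r)) E / wm \<mu> (\<lambda>x. u x powr (s * r)) cdQ
           \<le> max 1 c powr ((1 + 1 / \<tau>) / 2) * RH_const \<mu> d cd (2 * r - 1) u powr ((2 * r - 1) / 4)
               * (wm \<mu> u E / wm \<mu> u cdQ) powr (1 / 4)"
    by (simp add: Let_def \<rho>_def mult.assoc)
qed

end
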